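(* Let $G$ be a Lie group, $H\subseteq G$ a closed subgroup, and $\mathfrak{g}=\mathfrak{h}\oplus\mathfrak{m}$ a reductive decomposition. Equip $G/H$ with a $G$-invariant Riemannian metric (an $\mathrm{Ad}(H)$-invariant inner product $\langle\cdot,\cdot\rangle$ on $\mathfrak{m}$). Suppose $A$ is a $G$-invariant Codazzi tensor field on $G/H$, with $\langle\cdot,\cdot\rangle$-orthogonal eigenspace decomposition $\mathfrak{m}=\mathfrak{m}_1\oplus\cdots\oplus\mathfrak{m}_r$ on $\mathfrak{m}$, where $\mathfrak{m}_i$ corresponds to the eigenvalue $\lambda_i$ and $\lambda_1<\cdots<\lambda_r$. Then: (i) for $j\in\{1,r\}$ and every $Y\in\mathfrak{m}$, $\mathrm{Ric}^d(Y_j,Y_j)\le\mathrm{Ric}^d_j(Y_j,Y_j)$, where $Y_j$ is the $\mathfrak{m}_j$-component of $Y$; (ii) $\mathrm{s}^d_1+\cdots+\mathrm{s}^d_r=\mathrm{s}^d$.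
   Context: A reductive decomposition means $\mathfrak{m}$ is an $\mathrm{Ad}(H)$-invariant vector space complement of $\mathfrak{h}$ in $\mathfrak{g}$; $[X,Y]_{\mathfrak{m}}$ is the $\mathfrak{m}$-component of $[X,Y]$ in $\mathfrak{g}=\mathfrak{h}\oplus\mathfrak{m}$, and $\mathfrak{m}\cong T_{eH}(G/H)$. $G$-invariant tensor fields correspond to $\mathrm{Ad}(H)$-invariant tensors on $\mathfrak{m}$. A Codazzi tensor field is a symmetric twice-covariant tensor field $A$ with $(\nabla_XA)(Y,Z)=(\nabla_YA)(X,Z)$ for all vector fields, $\nabla$ the Levi-Civita connection. The Levi-Civita product $\alpha:\mathfrak{m}\times\mathfrak{m}\to\mathfrak{m}$ is defined by $2\langle\alpha(X,Y),Z\rangle=\langle[X,Y]_{\mathfrak{m}},Z\rangle-\langle X,[Y,Z]_{\mathfrak{m}}\rangle-\langle[X,Z]_{\mathfrak{m}},Y\rangle$. The difference curvature tensor is $R^d=R-R^0$, where $R$ is the Riemann curvature at $eH$ and $R^0(X,Y)Z=-[[X,Y]_{\mathfrak{h}},Z]$ is the curvature of the canonical connection of the second kind; explicitly $R^d(X,Y)Z=\alpha(X,\alpha(Y,Z))-\alpha(Y,\alpha(X,Z))-\alpha([X,Y]_{\mathfrak{m}},Z)$ for $X,Y,Z\in\mathfrak{m}$. The difference Ricci tensor is $\mathrm{Ric}^d(Y,Z)=\mathrm{tr}(X\mapsto R^d(X,Y)Z)$ (trace over $\mathfrak{m}$), and $\mathrm{s}^d$ is its trace with respect to $\langle\cdot,\cdot\rangle$.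 Each eigenspace $\mathfrak{m}_i$ is closed under $[\cdot,\cdot]_{\mathfrak{m}}$ and $\alpha$, so for $Y_i,Z_i\in\mathfrak{m}_i$ the endomorphism $X\mapsto R^d(X,Y_i)Z_i$ of $\mathfrak{m}$ restricts to an endomorphism of $\mathfrak{m}_i$; $\mathrm{Ric}^d_i(Y_i,Z_i)$ is the trace of this restriction, and $\mathrm{s}^d_i$ is the trace of $\mathrm{Ric}^d_i$ with respect to $\langle\cdot,\cdot\rangle|_{\mathfrak{m}_i\times\mathfrak{m}_i}$. *)

theory Defs
  imports "HOL-Analysis.Analysis"
begin

text \<open>Algebraic data at the origin eH of a reductive homogeneous space G/H.
  The Lie algebra g is modelled by a finite-dimensional real vector space 'g
  (its own inner product is never used), with a Lie bracket brk, the subalgebra h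
  and the complement m given as subspaces.\<close>

definition lie_bracket :: "('g::euclidean_space \<Rightarrow> 'g \<Rightarrow> 'g) \<Rightarrow> bool" where
  "lie_bracket brk \<longleftrightarrow> bilinear brk \<and> (\<forall>x y. brk x y = - brk y x) \<and>
     (\<forall>x y z. brk x (brk y z) + brk y (brk z x) + brk z (brk x y) = 0)"

definition reductive_decomp :: "('g::euclidean_space \<Rightarrow> 'g \<Rightarrow> 'g) \<Rightarrow> 'g set \<Rightarrow> 'g set \<Rightarrow> bool" where
  "reductive_decomp brk h m \<longleftrightarrow> lie_bracket brk \<and> subspace h \<and> subspace m \<and>
     h \<inter> m = {0} \<and> (\<forall>x. \<exists>a\<in>h. \<exists>X\<in>m. x = a + X) \<and>
     (\<forall>a\<in>h. \<forall>b\<in>h. brk a b \<in> h) \<and> (\<forall>a\<in>h. \<forall>X\<in>m. brk a X \<in> m)"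

definition prm :: "'g::euclidean_space set \<Rightarrow> 'g set \<Rightarrow> 'g \<Rightarrow> 'g" where
  "prm h m x = (THE X. X \<in> m \<and> x - X \<in> h)"

text \<open>Symmetric bilinear form on m, invariant under ad(h) (infinitesimal Ad(H)-invariance).\<close>
definition inv_sym_form :: "('g::euclidean_space \<Rightarrow> 'g \<Rightarrow> 'g) \<Rightarrow> 'g set \<Rightarrow> 'g set \<Rightarrow> ('g \<Rightarrow> 'g \<Rightarrow> real) \<Rightarrow> bool" where
  "inv_sym_form brk h m B \<longleftrightarrow> bilinear B \<and> (\<forall>X Y. B X Y = B Y X) \<and>
     (\<forall>a\<in>h. \<forall>X\<in>m. \<forall>Y\<in>m. B (brk a X) Y + B X (brk a Y) = 0)"

definition inv_inner :: "('g::euclidean_space \<Rightarrow> 'g \<Rightarrow> 'g) \<Rightarrow> 'g set \<Rightarrow> 'g set \<Rightarrow> ('g \<Rightarrow> 'g \<Rightarrow> real) \<Rightarrow> bool" where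
  "inv_inner brk h m ip \<longleftrightarrow> inv_sym_form brk h m ip \<and> (\<forall>X\<in>m. X \<noteq> 0 \<longrightarrow> ip X X > 0)"

definition lc_alpha :: "('g::euclidean_space \<Rightarrow> 'g \<Rightarrow> 'g) \<Rightarrow> 'g set \<Rightarrow> 'g set \<Rightarrow> ('g \<Rightarrow> 'g \<Rightarrow> real) \<Rightarrow> 'g \<Rightarrow> 'g \<Rightarrow> 'g" where
  "lc_alpha brk h m ip X Y = (THE W. W \<in> m \<and> (\<forall>Z\<in>m.
     2 * ip W Z = ip (prm h m (brk X Y)) Z - ip X (prm h m (brk Y Z)) - ip (prm h m (brk X Z)) Y))"

text \<open>Codazzi condition for the G-invariant tensor A at eH, using the Nomizu formula
  (nabla_X A)(Y,Z) = - A(alpha(X,Y),Z) - A(Y,alpha(X,Z)) for the Levi-Civita connection.\<close>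
definition codazzi :: "('g::euclidean_space \<Rightarrow> 'g \<Rightarrow> 'g) \<Rightarrow> 'g set \<Rightarrow> 'g set \<Rightarrow> ('g \<Rightarrow> 'g \<Rightarrow> real) \<Rightarrow> ('g \<Rightarrow> 'g \<Rightarrow> real) \<Rightarrow> bool" where
  "codazzi brk h m ip A \<longleftrightarrow> (\<forall>X\<in>m. \<forall>Y\<in>m. \<forall>Z\<in>m.
     - A (lc_alpha brk h m ip X Y) Z - A Y (lc_alpha brk h m ip X Z)
     = - A (lc_alpha brk h m ip Y X) Z - A X (lc_alpha brk h m ip Y Z))"

definition eigsp :: "'g::euclidean_space set \<Rightarrow> ('g \<Rightarrow> 'g \<Rightarrow> real) \<Rightarrow> ('g \<Rightarrow> 'g \<Rightarrow> real) \<Rightarrow> real \<Rightarrow> 'g set" where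
  "eigsp m ip A lam = {X \<in> m. \<forall>Y\<in>m. A X Y = lam * ip X Y}"

definition Rd :: "('g::euclidean_space \<Rightarrow> 'g \<Rightarrow> 'g) \<Rightarrow> 'g set \<Rightarrow> 'g set \<Rightarrow> ('g \<Rightarrow> 'g \<Rightarrow> real) \<Rightarrow> 'g \<Rightarrow> 'g \<Rightarrow> 'g \<Rightarrow> 'g" where
  "Rd brk h m ip X Y Z = (let al = lc_alpha brk h m ip in
     al X (al Y Z) - al Y (al X Z) - al (prm h m (brk X Y)) Z)"

definition lin_trace :: "'g::euclidean_space set \<Rightarrow> ('g \<Rightarrow> 'g) \<Rightarrow> real" where
  "lin_trace V f = (let B = (SOME B. independent B \<and> span B = V) in
     \<Sum>b\<in>B. real_vector.representation B (f b) b)"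

definition form_trace :: "('g::euclidean_space \<Rightarrow> 'g \<Rightarrow> real) \<Rightarrow> 'g set \<Rightarrow> ('g \<Rightarrow> 'g \<Rightarrow> real) \<Rightarrow> real" where
  "form_trace ip V F = (let Ob = (SOME Ob. finite Ob \<and> Ob \<subseteq> V \<and> span Ob = V \<and>
        (\<forall>e\<in>Ob. \<forall>e'\<in>Ob. ip e e' = (if e = e' then 1 else 0))) in
     \<Sum>e\<in>Ob. F e e)"

text \<open>Difference Ricci tensor: trace over V (V = m gives Ric^d, V = m_i gives Ric^d_i).\<close>
definition Ricd :: "('g::euclidean_space \<Rightarrow> 'g \<Rightarrow> 'g) \<Rightarrow> 'g set \<Rightarrow> 'g set \<Rightarrow> ('g \<Rightarrow> 'g \<Rightarrow> real) \<Rightarrow> 'g set \<Rightarrow> 'g \<Rightarrow> 'g \<Rightarrow> real" where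
  "Ricd brk h m ip V Y Z = lin_trace V (\<lambda>X. Rd brk h m ip X Y Z)"

text \<open>Difference scalar curvature s^d (V = m) and s^d_i (V = m_i).\<close>
definition sd :: "('g::euclidean_space \<Rightarrow> 'g \<Rightarrow> 'g) \<Rightarrow> 'g set \<Rightarrow> 'g set \<Rightarrow> ('g \<Rightarrow> 'g \<Rightarrow> real) \<Rightarrow> 'g set \<Rightarrow> real" where
  "sd brk h m ip V = form_trace ip V (Ricd brk h m ip V)"

definition dcomp :: "(nat \<Rightarrow> 'g::euclidean_space set) \<Rightarrow> nat \<Rightarrow> nat \<Rightarrow> 'g \<Rightarrow> 'g" where
  "dcomp M r j Y = (THE Z. \<exists>f. (\<forall>i\<in>{1..r}. f i \<in> M i) \<and> Y = (\<Sum>i=1..r. f i) \<and> Z = f j)"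

end

theory Submission
  imports Defs
begin

(*
  Fix an orthonormal eigenbasis of A on m. Evaluated on eigenvectors X, Y, Z with eigenvalues
  x, y, z, the Codazzi equation says (y - z) <alpha(X,Y),Z> = (x - z) <alpha(Y,X),Z>.
  Hence alpha preserves every eigenspace, so R^d restricts to them, and the number
  w = (y - z) <alpha(X,Y),Z> is symmetric in X, Y, Z. For x ~= y the term <R^d(X,Y)Y,X>
  expands into a sum over basis vectors Z of c(x,y,z) w^2, where c = codazzi_coeff,
  c(x,y,z) = 2/((y - z)(x - z)) for pairwise distinct x, y, z and 0 otherwise.

  So Ric^d(Y,Y) - Ric^d_j(Y,Y) is a sum of (c(x,y,z) + c(z,y,x)) w^2, and
  c(x,y,z) + c(z,y,x) = -2/((y - x)(y - z)) <= 0 when y is the least or the largest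
  eigenvalue. Likewise s^d - (s^d_1 + ... + s^d_r) is the sum of c(x,y,z) w^2 over all
  triples of basis vectors, which vanishes because the cyclic sum of c is zero.
*)

section \<open>Orthonormal bases and traces\<close>

lemma bilinear_sum_left: "bilinear f \<Longrightarrow> f (\<Sum>i\<in>I. g i) z = (\<Sum>i\<in>I. f (g i) z)"
  using linear_sum[of "\<lambda>x. f x z"] by (simp add: bilinear_def)

lemma bilinear_sum_right: "bilinear f \<Longrightarrow> f z (\<Sum>i\<in>I. g i) = (\<Sum>i\<in>I. f z (g i))"
  using linear_sum[of "\<lambda>x. f z x"] by (simp add: bilinear_def)

definition orthonormal_basis :: "('a::euclidean_space \<Rightarrow> 'a \<Rightarrow> real) \<Rightarrow> 'a set \<Rightarrow> 'a set \<Rightarrow> bool" where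
  "orthonormal_basis ip V B \<longleftrightarrow> finite B \<and> B \<subseteq> V \<and> span B = V \<and>
     (\<forall>e\<in>B. \<forall>e'\<in>B. ip e e' = (if e = e' then 1 else 0))"

lemma orthonormal_basis_expansion:
  assumes B: "orthonormal_basis ip V B" and ip: "bilinear ip" and v: "v \<in> V"
  shows "v = (\<Sum>e\<in>B. ip v e *\<^sub>R e)"
proof -
  have fin: "finite B" and on: "\<And>e e'. e \<in> B \<Longrightarrow> e' \<in> B \<Longrightarrow> ip e e' = (if e = e' then 1 else 0)"
    using B unfolding orthonormal_basis_def by auto
  obtain u where u: "v = (\<Sum>e\<in>B. u e *\<^sub>R e)"
  proof -
    have "v \<in> range (\<lambda>u. \<Sum>e\<in>B. u e *\<^sub>R e)"
      using v B span_finite[OF fin] unfolding orthonormal_basis_def by simp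
    thus ?thesis using that by blast
  qed
  have "ip v e' = u e'" if e': "e' \<in> B" for e'
  proof -
    have "ip v e' = (\<Sum>e\<in>B. u e * ip e e')"
      unfolding u bilinear_sum_left[OF ip] by (simp add: bilinear_lmul[OF ip])
    also have "\<dots> = (\<Sum>e\<in>B. if e = e' then u e else 0)"
      by (rule sum.cong) (auto simp: on e')
    finally show ?thesis using fin e' by simp
  qed
  thus ?thesis using u by simp
qed

lemma linear_orthonormal_basis_expansion:
  fixes L :: "'a::euclidean_space \<Rightarrow> real"
  assumes "orthonormal_basis ip V B" "bilinear ip" "linear L" "v \<in> V"
  shows "L v = (\<Sum>e\<in>B. ip v e * L e)"
proof -
  have "L v = L (\<Sum>e\<in>B. ip v e *\<^sub>R e)"
    using orthonormal_basis_expansion[OF assms(1,2,4)] by simp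
  thus ?thesis by (simp add: linear_sum[OF assms(3)] linear_scale[OF assms(3)])
qed

lemma representation_orthonormal_basis_expansion:
  assumes C: "independent C" "span C = V" and B: "orthonormal_basis ip V B" and ip: "bilinear ip"
    and v: "v \<in> V"
  shows "representation C v c = (\<Sum>e\<in>B. ip v e * representation C e c)"
proof -
  have BV: "B \<subseteq> V" using B unfolding orthonormal_basis_def by auto
  have "representation C v = representation C (\<Sum>e\<in>B. ip v e *\<^sub>R e)"
    using orthonormal_basis_expansion[OF B ip v] by simp
  also have "\<dots> = (\<lambda>b. \<Sum>e\<in>B. representation C (ip v e *\<^sub>R e) b)"
    by (rule representation_sum[OF C(1)]) (use BV C in \<open>auto intro: span_scale\<close>)
  finally show ?thesis
    using BV C by (simp add: representation_scale subsetD)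
qed

lemma lin_trace_orthonormal_basis:
  fixes f :: "'a::euclidean_space \<Rightarrow> 'a"
  assumes V: "subspace V" and B: "orthonormal_basis ip V B" and ip: "bilinear ip"
    and f: "linear f" and fV: "\<And>x. x \<in> V \<Longrightarrow> f x \<in> V"
  shows "lin_trace V f = (\<Sum>e\<in>B. ip (f e) e)"
proof -
  define C where "C = (SOME C. independent C \<and> span C = V)"
  have "\<exists>C. independent C \<and> span C = V"
    using basis_exists[of V] span_minimal[OF _ V] by (metis subset_antisym)
  hence C: "independent C" "span C = V" unfolding C_def by (metis (mono_tags, lifting) someI_ex)+
  have finC: "finite C" using C(1) by (rule finiteI_independent)
  have BV: "B \<subseteq> V" using B unfolding orthonormal_basis_def by auto
  have "(\<Sum>e\<in>B. ip (f e) e) = (\<Sum>e\<in>B. \<Sum>c\<in>C. representation C e c * ip (f c) e)"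
  proof (rule sum.cong[OF refl])
    fix e assume "e \<in> B"
    hence "e = (\<Sum>c\<in>C. representation C e c *\<^sub>R c)"
      using BV C sum_representation_eq[OF C(1) _ finC] by auto
    hence "f e = f (\<Sum>c\<in>C. representation C e c *\<^sub>R c)" by (rule arg_cong)
    also have "\<dots> = (\<Sum>c\<in>C. representation C e c *\<^sub>R f c)"
      by (simp add: linear_sum[OF f] linear_scale[OF f])
    finally have "f e = (\<Sum>c\<in>C. representation C e c *\<^sub>R f c)" .
    thus "ip (f e) e = (\<Sum>c\<in>C. representation C e c * ip (f c) e)"
      by (simp add: bilinear_sum_left[OF ip] bilinear_lmul[OF ip])
  qed
  also have "\<dots> = (\<Sum>c\<in>C. \<Sum>e\<in>B. ip (f c) e * representation C e c)"
    by (subst sum.swap) (simp add: mult.commute)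
  also have "\<dots> = (\<Sum>c\<in>C. representation C (f c) c)"
  proof (rule sum.cong[OF refl])
    fix c assume "c \<in> C"
    hence "f c \<in> V" using fV C span_base by blast
    thus "(\<Sum>e\<in>B. ip (f c) e * representation C e c) = representation C (f c) c"
      by (simp add: representation_orthonormal_basis_expansion[OF C B ip])
  qed
  finally show ?thesis unfolding lin_trace_def Let_def C_def by simp
qed

lemma orthonormal_basis_diagonal_sum_eq:
  fixes G ip :: "'a::euclidean_space \<Rightarrow> 'a \<Rightarrow> real"
  assumes B: "orthonormal_basis ip V B" and B': "orthonormal_basis ip V B'"
    and ip: "bilinear ip" "\<And>X Y. ip X Y = ip Y X" and G: "bilinear G"
  shows "(\<Sum>e\<in>B. G e e) = (\<Sum>e\<in>B'. G e e)"
proof -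
  have BV: "B \<subseteq> V" and B'V: "B' \<subseteq> V" using B B' unfolding orthonormal_basis_def by auto
  have "(\<Sum>e\<in>B. G e e) = (\<Sum>e\<in>B. \<Sum>u\<in>B'. ip e u * G u e)"
  proof (rule sum.cong[OF refl])
    fix e assume "e \<in> B"
    hence "G e e = G (\<Sum>u\<in>B'. ip e u *\<^sub>R u) e"
      using orthonormal_basis_expansion[OF B' ip(1)] BV by auto
    thus "G e e = (\<Sum>u\<in>B'. ip e u * G u e)"
      by (simp add: bilinear_sum_left[OF G] bilinear_lmul[OF G])
  qed
  also have "\<dots> = (\<Sum>u\<in>B'. \<Sum>e\<in>B. ip u e * G u e)"
    by (subst sum.swap) (simp add: ip(2))
  also have "\<dots> = (\<Sum>u\<in>B'. G u u)"
  proof (rule sum.cong[OF refl])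
    fix u assume "u \<in> B'"
    hence "G u u = G u (\<Sum>e\<in>B. ip u e *\<^sub>R e)"
      using orthonormal_basis_expansion[OF B ip(1)] B'V by auto
    thus "(\<Sum>e\<in>B. ip u e * G u e) = G u u"
      by (simp add: bilinear_sum_right[OF G] bilinear_rmul[OF G])
  qed
  finally show ?thesis .
qed

lemma form_trace_orthonormal_basis:
  fixes G ip :: "'a::euclidean_space \<Rightarrow> 'a \<Rightarrow> real"
  assumes B: "orthonormal_basis ip V B" and ip: "bilinear ip" "\<And>X Y. ip X Y = ip Y X"
    and G: "bilinear G" and FG: "\<And>Y Z. Y \<in> V \<Longrightarrow> Z \<in> V \<Longrightarrow> F Y Z = G Y Z"
  shows "form_trace ip V F = (\<Sum>e\<in>B. F e e)"
proof -
  define B0 where "B0 = (SOME B. orthonormal_basis ip V B)"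
  have trace: "form_trace ip V F = (\<Sum>e\<in>B0. F e e)"
    unfolding form_trace_def orthonormal_basis_def Let_def B0_def by (rule refl)
  have B0: "orthonormal_basis ip V B0"
    unfolding B0_def using B by (rule someI)
  have "F e e = G e e" if "e \<in> B0 \<union> B" for e
    using FG B0 B that unfolding orthonormal_basis_def by blast
  hence "(\<Sum>e\<in>B0. F e e) = (\<Sum>e\<in>B0. G e e)" "(\<Sum>e\<in>B. F e e) = (\<Sum>e\<in>B. G e e)"
    by (auto intro!: sum.cong)
  thus ?thesis
    using trace orthonormal_basis_diagonal_sum_eq[OF B0 B ip G] by simp
qed

lemma dcomp_eqI:
  fixes ip :: "'a::euclidean_space \<Rightarrow> 'a \<Rightarrow> real" and M :: "nat \<Rightarrow> 'a set"
  assumes ip: "bilinear ip" and M: "\<And>i. i \<in> {1..r} \<Longrightarrow> subspace (M i)"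
    and orth: "\<And>i k X Y. i \<in> {1..r} \<Longrightarrow> k \<in> {1..r} \<Longrightarrow> i \<noteq> k \<Longrightarrow> X \<in> M i \<Longrightarrow> Y \<in> M k \<Longrightarrow> ip X Y = 0"
    and pos: "\<And>X. X \<in> M j \<Longrightarrow> X \<noteq> 0 \<Longrightarrow> 0 < ip X X" and j: "j \<in> {1..r}"
    and c: "\<And>i. i \<in> {1..r} \<Longrightarrow> c i \<in> M i" and Y: "Y = (\<Sum>i=1..r. c i)"
  shows "dcomp M r j Y = c j"
  unfolding dcomp_def
proof (rule the_equality)
  show "\<exists>f. (\<forall>i\<in>{1..r}. f i \<in> M i) \<and> Y = (\<Sum>i=1..r. f i) \<and> c j = f j"
    using c Y by blast
next
  fix Z assume "\<exists>f. (\<forall>i\<in>{1..r}. f i \<in> M i) \<and> Y = (\<Sum>i=1..r. f i) \<and> Z = f j"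
  then obtain f where f: "\<And>i. i \<in> {1..r} \<Longrightarrow> f i \<in> M i" and Yf: "Y = (\<Sum>i=1..r. f i)" and Z: "Z = f j"
    by blast
  define d where "d i = f i - c i" for i
  have d: "d i \<in> M i" if "i \<in> {1..r}" for i
    unfolding d_def using M[OF that] f[OF that] c[OF that] by (rule subspace_diff)
  have "0 = ip (d j) (\<Sum>i=1..r. d i)"
    unfolding d_def using Y Yf by (simp add: sum_subtractf bilinear_rzero[OF ip])
  also have "\<dots> = (\<Sum>i=1..r. if i = j then ip (d j) (d j) else 0)"
    unfolding bilinear_sum_right[OF ip] using orth[OF j _ _ d[OF j] d] by (intro sum.cong refl) auto
  also have "\<dots> = ip (d j) (d j)" using j by simp
  finally have "d j = 0" using pos[OF d[OF j]] by fastforce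
  thus "Z = c j" unfolding Z d_def by simp
qed

section \<open>Orthonormal eigenbases of symmetric forms\<close>

lemma nonneg_quadratic_imp_linear_coeff_zero:
  fixes a c :: real
  assumes "0 \<le> c" and "\<And>t. 0 \<le> 2 * t * a + t\<^sup>2 * c"
  shows "a = 0"
proof -
  define t where "t = - a / (c + 1)"
  have a: "a = - t * (c + 1)" unfolding t_def using assms(1) by simp
  have "0 \<le> 2 * t * a + t\<^sup>2 * c" by (rule assms(2))
  also have "\<dots> = - t\<^sup>2 * (c + 2)" unfolding a by (simp add: algebra_simps power2_eq_square)
  finally have "t\<^sup>2 * (c + 2) \<le> 0" by simp
  moreover have "0 < c + 2" using assms(1) by simp
  ultimately have "t = 0" by (simp add: mult_le_0_iff)
  thus ?thesis using a by simp
qed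

lemma symmetric_form_maximizer_is_eigenvector:
  fixes B ip :: "'a::real_vector \<Rightarrow> 'a \<Rightarrow> real"
  assumes V: "subspace V" and B: "bilinear B" "\<And>X Y. B X Y = B Y X"
    and ip: "bilinear ip" "\<And>X Y. ip X Y = ip Y X"
    and le: "\<And>Y. Y \<in> V \<Longrightarrow> B Y Y \<le> l * ip Y Y"
    and X0: "X0 \<in> V" "B X0 X0 = l * ip X0 X0" and Z: "Z \<in> V"
  shows "B X0 Z = l * ip X0 Z"
proof -
  have "0 \<le> 2 * t * (l * ip X0 Z - B X0 Z) + t\<^sup>2 * (l * ip Z Z - B Z Z)" for t
  proof -
    have "0 \<le> l * ip (X0 + t *\<^sub>R Z) (X0 + t *\<^sub>R Z) - B (X0 + t *\<^sub>R Z) (X0 + t *\<^sub>R Z)"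
      using le[of "X0 + t *\<^sub>R Z"] X0 Z V by (simp add: subspace_add subspace_scale)
    also have "\<dots> = 2 * t * (l * ip X0 Z - B X0 Z) + t\<^sup>2 * (l * ip Z Z - B Z Z)"
      using X0(2) B(2)[of Z X0] ip(2)[of Z X0]
      by (simp add: bilinear_ladd[OF B(1)] bilinear_radd[OF B(1)] bilinear_lmul[OF B(1)]
          bilinear_rmul[OF B(1)] bilinear_ladd[OF ip(1)] bilinear_radd[OF ip(1)]
          bilinear_lmul[OF ip(1)] bilinear_rmul[OF ip(1)] algebra_simps power2_eq_square)
    finally show ?thesis .
  qed
  moreover have "0 \<le> l * ip Z Z - B Z Z" using le[OF Z] by simp
  ultimately have "l * ip X0 Z - B X0 Z = 0"
    by (rule nonneg_quadratic_imp_linear_coeff_zero[rotated])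
  thus ?thesis by simp
qed

lemma symmetric_form_eigenvector_exists:
  fixes B ip :: "'a::euclidean_space \<Rightarrow> 'a \<Rightarrow> real"
  assumes V: "subspace V" "V \<noteq> {0}" and B: "bilinear B" "\<And>X Y. B X Y = B Y X"
    and ip: "bilinear ip" "\<And>X Y. ip X Y = ip Y X"
    and pos: "\<And>X. X \<in> V \<Longrightarrow> X \<noteq> 0 \<Longrightarrow> 0 < ip X X"
  shows "\<exists>X0 l. X0 \<in> V \<and> X0 \<noteq> 0 \<and> (\<forall>Z\<in>V. B X0 Z = l * ip X0 Z)"
proof -
  define S where "S = V \<inter> sphere 0 1"
  define rayleigh where "rayleigh X = B X X / ip X X" for X
  have S_pos: "0 < ip X X" if "X \<in> S" for X
    using pos that unfolding S_def by (metis IntE mem_sphere_0 norm_zero zero_neq_one)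
  have compact: "compact S"
    unfolding S_def using V(1) compact_Int_closed[of "sphere 0 1" V] by (simp add: closed_subspace Int_commute)
  obtain X where X: "X \<in> V" "X \<noteq> 0" using V subspace_0 by blast
  hence "X /\<^sub>R norm X \<in> S" using V(1) unfolding S_def by (simp add: subspace_scale)
  hence nonempty: "S \<noteq> {}" by blast
  have cont: "continuous_on S rayleigh"
    unfolding rayleigh_def using S_pos
    by (intro continuous_on_divide bilinear_continuous_on_compose[OF continuous_on_id continuous_on_id B(1)]
        bilinear_continuous_on_compose[OF continuous_on_id continuous_on_id ip(1)]) (metis less_irrefl)
  obtain X0 where X0: "X0 \<in> S" "\<And>Y. Y \<in> S \<Longrightarrow> rayleigh Y \<le> rayleigh X0"
    using continuous_attains_sup[OF compact nonempty cont] by blast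
  define l where "l = rayleigh X0"
  have X0V: "X0 \<in> V" "X0 \<noteq> 0" using X0(1) unfolding S_def by auto
  have le: "B Y Y \<le> l * ip Y Y" if Y: "Y \<in> V" for Y
  proof (cases "Y = 0")
    case True thus ?thesis using bilinear_lzero[OF B(1)] bilinear_lzero[OF ip(1)] by simp
  next
    case False
    have "Y /\<^sub>R norm Y \<in> S" using Y False V(1) unfolding S_def by (simp add: subspace_scale)
    moreover have "rayleigh (Y /\<^sub>R norm Y) = rayleigh Y" unfolding rayleigh_def
      using False by (simp add: bilinear_lmul[OF B(1)] bilinear_rmul[OF B(1)]
          bilinear_lmul[OF ip(1)] bilinear_rmul[OF ip(1)])
    ultimately have "rayleigh Y \<le> l" using X0(2) unfolding l_def by metis
    hence "B Y Y / ip Y Y \<le> l" unfolding rayleigh_def .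
    thus ?thesis using pos[OF Y False] by (simp add: divide_le_eq)
  qed
  have max: "B X0 X0 = l * ip X0 X0"
    using pos[OF X0V] unfolding l_def rayleigh_def by simp
  have "\<forall>Z\<in>V. B X0 Z = l * ip X0 Z"
    using symmetric_form_maximizer_is_eigenvector[OF V(1) B ip le X0V(1) max] by blast
  thus ?thesis using X0V by blast
qed

lemma orthonormal_basis_insert:
  assumes V: "subspace V" and ip: "bilinear ip" "\<And>X Y. ip X Y = ip Y X"
    and e0: "e0 \<in> V" "ip e0 e0 = 1"
    and B: "orthonormal_basis ip {Z \<in> V. ip e0 Z = 0} B"
  shows "orthonormal_basis ip V (insert e0 B)"
proof -
  have BV: "B \<subseteq> V" and B_orth: "\<And>e. e \<in> B \<Longrightarrow> ip e0 e = 0"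
    and spanB: "span B = {Z \<in> V. ip e0 Z = 0}"
    using B unfolding orthonormal_basis_def by auto
  have "Z \<in> span (insert e0 B)" if Z: "Z \<in> V" for Z
  proof -
    have "ip e0 (Z - ip e0 Z *\<^sub>R e0) = 0"
      using e0 by (simp add: bilinear_rsub[OF ip(1)] bilinear_rmul[OF ip(1)])
    hence "Z - ip e0 Z *\<^sub>R e0 \<in> span B"
      using Z e0 V spanB by (simp add: subspace_diff subspace_scale)
    hence "Z - ip e0 Z *\<^sub>R e0 \<in> span (insert e0 B)"
      using span_mono[of B "insert e0 B"] by blast
    moreover have "ip e0 Z *\<^sub>R e0 \<in> span (insert e0 B)"
      by (simp add: span_base span_scale)
    ultimately have "Z - ip e0 Z *\<^sub>R e0 + ip e0 Z *\<^sub>R e0 \<in> span (insert e0 B)"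
      by (rule span_add)
    thus ?thesis by simp
  qed
  moreover have "span (insert e0 B) \<subseteq> V"
    using span_minimal[OF _ V, of "insert e0 B"] e0(1) BV by simp
  ultimately have span: "span (insert e0 B) = V" by blast
  have "e0 \<notin> B"
  proof
    assume "e0 \<in> B"
    thus False using B_orth[of e0] e0(2) by simp
  qed
  hence orth: "ip e e' = (if e = e' then 1 else 0)" if "e \<in> insert e0 B" "e' \<in> insert e0 B" for e e'
    using that B_orth[of e] B_orth[of e'] ip(2)[of e e0] e0(2) B unfolding orthonormal_basis_def
    by (cases "e = e0"; cases "e' = e0") auto
  show ?thesis
    unfolding orthonormal_basis_def
  proof (intro conjI ballI)
    show "finite (insert e0 B)" using B unfolding orthonormal_basis_def by simp
    show "insert e0 B \<subseteq> V" using e0(1) BV by simp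
  qed (fact span, fact orth)
qed

lemma unit_eigenvector_exists:
  fixes B ip :: "'a::euclidean_space \<Rightarrow> 'a \<Rightarrow> real"
  assumes V: "subspace V" "V \<noteq> {0}" and B: "bilinear B" "\<And>X Y. B X Y = B Y X"
    and ip: "bilinear ip" "\<And>X Y. ip X Y = ip Y X"
    and pos: "\<And>X. X \<in> V \<Longrightarrow> X \<noteq> 0 \<Longrightarrow> 0 < ip X X"
  shows "\<exists>e l. e \<in> V \<and> ip e e = 1 \<and> (\<forall>Z\<in>V. B e Z = l * ip e Z)"
proof -
  obtain X l where X: "X \<in> V" "X \<noteq> 0" and eig: "\<forall>Z\<in>V. B X Z = l * ip X Z"
    using symmetric_form_eigenvector_exists[OF V B ip pos] by blast
  define e where "e = (1 / sqrt (ip X X)) *\<^sub>R X"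
  have "ip e e = (1 / sqrt (ip X X))\<^sup>2 * ip X X"
    unfolding e_def by (simp add: bilinear_lmul[OF ip(1)] bilinear_rmul[OF ip(1)] power2_eq_square)
  also have "\<dots> = 1" using pos[OF X] by (simp add: power_divide)
  finally have "ip e e = 1" .
  moreover have "e \<in> V" unfolding e_def using V(1) X(1) by (rule subspace_scale)
  moreover have "\<forall>Z\<in>V. B e Z = l * ip e Z"
    unfolding e_def using eig by (simp add: bilinear_lmul[OF ip(1)] bilinear_lmul[OF B(1)])
  ultimately show ?thesis by blast
qed

lemma eigenvector_of_orthogonal_complement:
  fixes B ip :: "'a::real_vector \<Rightarrow> 'a \<Rightarrow> real"
  assumes B: "bilinear B" "\<And>X Y. B X Y = B Y X" and ip: "bilinear ip" "\<And>X Y. ip X Y = ip Y X"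
    and V: "subspace V" and e0: "e0 \<in> V" "ip e0 e0 = 1" "\<And>Z. Z \<in> V \<Longrightarrow> B e0 Z = l * ip e0 Z"
    and e: "e \<in> V" "ip e0 e = 0" and eig: "\<And>Z. Z \<in> {Z \<in> V. ip e0 Z = 0} \<Longrightarrow> B e Z = \<mu> * ip e Z"
    and Z: "Z \<in> V"
  shows "B e Z = \<mu> * ip e Z"
proof -
  define Z' where "Z' = Z - ip e0 Z *\<^sub>R e0"
  have "B e e0 = 0" using B(2)[of e e0] e0(3)[OF e(1)] e(2) by simp
  moreover have "ip e e0 = 0" using ip(2)[of e e0] e(2) by simp
  ultimately have "B e Z = B e Z'" "ip e Z = ip e Z'"
    unfolding Z'_def
    by (simp_all add: bilinear_rsub[OF B(1)] bilinear_rmul[OF B(1)] bilinear_rsub[OF ip(1)] bilinear_rmul[OF ip(1)])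
  moreover have "Z' \<in> {Z \<in> V. ip e0 Z = 0}"
    unfolding Z'_def using Z e0 V
    by (simp add: subspace_diff subspace_scale bilinear_rsub[OF ip(1)] bilinear_rmul[OF ip(1)])
  ultimately show ?thesis using eig by simp
qed

theorem orthonormal_eigenbasis_exists:
  fixes B ip :: "'a::euclidean_space \<Rightarrow> 'a \<Rightarrow> real"
  assumes B: "bilinear B" "\<And>X Y. B X Y = B Y X" and ip: "bilinear ip" "\<And>X Y. ip X Y = ip Y X"
  shows "subspace V \<Longrightarrow> (\<And>X. X \<in> V \<Longrightarrow> X \<noteq> 0 \<Longrightarrow> 0 < ip X X) \<Longrightarrow>
    \<exists>Ob. orthonormal_basis ip V Ob \<and> (\<forall>e\<in>Ob. \<exists>\<mu>. \<forall>Z\<in>V. B e Z = \<mu> * ip e Z)"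
proof (induction "dim V" arbitrary: V rule: less_induct)
  case less
  note V = less.prems(1) and pos = less.prems(2)
  show ?case
  proof (cases "V = {0}")
    case True
    thus ?thesis by (intro exI[of _ "{}"]) (simp add: orthonormal_basis_def)
  next
    case False
    then obtain e0 l where e0: "e0 \<in> V" "ip e0 e0 = 1" and e0_eig: "\<And>Z. Z \<in> V \<Longrightarrow> B e0 Z = l * ip e0 Z"
      using unit_eigenvector_exists[OF V _ B ip pos] by blast
    define V' where "V' = {Z \<in> V. ip e0 Z = 0}"
    have V': "subspace V'"
      unfolding V'_def subspace_def using V
      by (auto simp: subspace_0 subspace_add subspace_scale bilinear_rzero[OF ip(1)]
          bilinear_radd[OF ip(1)] bilinear_rmul[OF ip(1)])
    have "V' \<subseteq> V" "e0 \<in> V - V'" unfolding V'_def using e0 by auto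
    moreover have "span V' = V'" "span V = V" using V V' by simp_all
    ultimately have "span V' \<subset> span V" by blast
    hence "dim V' < dim V" by (rule dim_psubset)
    moreover have "\<And>X. X \<in> V' \<Longrightarrow> X \<noteq> 0 \<Longrightarrow> 0 < ip X X" using pos unfolding V'_def by auto
    ultimately have "\<exists>Ob'. orthonormal_basis ip V' Ob' \<and> (\<forall>e\<in>Ob'. \<exists>\<mu>. \<forall>Z\<in>V'. B e Z = \<mu> * ip e Z)"
      by (rule less.hyps[OF _ V'])
    then obtain Ob' where Ob': "orthonormal_basis ip V' Ob'"
      and eig': "\<forall>e\<in>Ob'. \<exists>\<mu>. \<forall>Z\<in>V'. B e Z = \<mu> * ip e Z"
      by blast
    have "\<exists>\<mu>. \<forall>Z\<in>V. B e Z = \<mu> * ip e Z" if e: "e \<in> Ob'" for e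
    proof -
      obtain \<mu> where \<mu>: "\<And>Z. Z \<in> V' \<Longrightarrow> B e Z = \<mu> * ip e Z" using eig' e by blast
      have "e \<in> V'" using Ob' e unfolding orthonormal_basis_def by blast
      hence "\<forall>Z\<in>V. B e Z = \<mu> * ip e Z"
        using eigenvector_of_orthogonal_complement[OF B ip V e0 e0_eig _ _ \<mu>[unfolded V'_def]]
        unfolding V'_def by blast
      thus ?thesis by blast
    qed
    moreover have "orthonormal_basis ip V (insert e0 Ob')"
      using orthonormal_basis_insert[OF V ip e0] Ob' unfolding V'_def by simp
    ultimately show ?thesis using e0_eig by blast
  qed
qed

section \<open>The Levi-Civita product and the difference curvature\<close>

locale reductive_metric =
  fixes brk :: "'g::euclidean_space \<Rightarrow> 'g \<Rightarrow> 'g" and h m :: "'g set" and ip :: "'g \<Rightarrow> 'g \<Rightarrow> real"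
  assumes bilinear_brk: "bilinear brk" and brk_antisym: "\<And>x y. brk x y = - brk y x"
    and subspace_h: "subspace h" and subspace_m: "subspace m"
    and h_inter_m: "h \<inter> m = {0}" and h_plus_m: "\<And>x. \<exists>a\<in>h. \<exists>X\<in>m. x = a + X"
    and bilinear_ip: "bilinear ip" and ip_sym: "\<And>X Y. ip X Y = ip Y X"
    and ip_pos: "\<And>X. X \<in> m \<Longrightarrow> X \<noteq> 0 \<Longrightarrow> 0 < ip X X"
begin

abbreviation \<pi> where "\<pi> \<equiv> prm h m"
abbreviation \<alpha> where "\<alpha> \<equiv> lc_alpha brk h m ip"
abbreviation R\<^sub>d where "R\<^sub>d \<equiv> Rd brk h m ip"

lemma prm_unique_exists: "\<exists>!X. X \<in> m \<and> x - X \<in> h"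
proof -
  obtain a X where aX: "a \<in> h" "X \<in> m" "x = a + X" using h_plus_m by blast
  show ?thesis
  proof (rule ex1I[of _ X])
    show "X \<in> m \<and> x - X \<in> h" using aX by simp
    fix Y assume Y: "Y \<in> m \<and> x - Y \<in> h"
    have "X - Y \<in> m" using Y aX subspace_m by (simp add: subspace_diff)
    moreover have "X - Y \<in> h" using subspace_diff[OF subspace_h, of "x - Y" "x - X"] Y aX by simp
    ultimately have "X - Y = 0" using h_inter_m by blast
    thus "Y = X" by simp
  qed
qed

lemma prm_in_m: "\<pi> x \<in> m" and diff_prm_in_h: "x - \<pi> x \<in> h"
  using theI'[OF prm_unique_exists[of x]] unfolding prm_def by auto

lemma prm_eqI: "X \<in> m \<Longrightarrow> x - X \<in> h \<Longrightarrow> \<pi> x = X"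
  using prm_unique_exists[of x] prm_in_m[of x] diff_prm_in_h[of x] by blast

lemma linear_prm: "linear \<pi>"
proof (rule linearI)
  fix x y
  have "(x - \<pi> x) + (y - \<pi> y) \<in> h" using diff_prm_in_h subspace_h by (simp add: subspace_add)
  thus "\<pi> (x + y) = \<pi> x + \<pi> y"
    using prm_in_m subspace_m by (intro prm_eqI) (simp_all add: subspace_add algebra_simps)
next
  fix c x
  have "c *\<^sub>R (x - \<pi> x) \<in> h" using diff_prm_in_h subspace_h by (simp add: subspace_scale)
  thus "\<pi> (c *\<^sub>R x) = c *\<^sub>R \<pi> x"
    using prm_in_m subspace_m by (intro prm_eqI) (simp_all add: subspace_scale algebra_simps)
qed

lemmas linearity_simps = bilinear_ladd[OF bilinear_brk] bilinear_radd[OF bilinear_brk]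
  bilinear_lmul[OF bilinear_brk] bilinear_rmul[OF bilinear_brk]
  bilinear_lsub[OF bilinear_brk] bilinear_rsub[OF bilinear_brk]
  bilinear_lneg[OF bilinear_brk] bilinear_rneg[OF bilinear_brk]
  bilinear_ladd[OF bilinear_ip] bilinear_radd[OF bilinear_ip]
  bilinear_lmul[OF bilinear_ip] bilinear_rmul[OF bilinear_ip]
  bilinear_lsub[OF bilinear_ip] bilinear_rsub[OF bilinear_ip]
  bilinear_lneg[OF bilinear_ip] bilinear_rneg[OF bilinear_ip]
  linear_add[OF linear_prm] linear_scale[OF linear_prm] linear_diff[OF linear_prm] linear_neg[OF linear_prm]

lemma linear_ip_right: "linear (ip X)"
  using bilinear_ip unfolding bilinear_def by blast

lemma eq_if_ip_eq:
  assumes "W \<in> m" "W' \<in> m" "\<And>Z. Z \<in> m \<Longrightarrow> ip W Z = ip W' Z"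
  shows "W = W'"
proof (rule ccontr)
  assume "W \<noteq> W'"
  hence "0 < ip (W - W') (W - W')" using ip_pos assms(1,2) subspace_m by (simp add: subspace_diff)
  moreover have "ip (W - W') (W - W') = 0"
    using assms subspace_m by (simp add: linearity_simps subspace_diff)
  ultimately show False by simp
qed

lemma orthonormal_basis_m_exists: "\<exists>B. orthonormal_basis ip m B"
  using orthonormal_eigenbasis_exists[OF bilinear_ip ip_sym bilinear_ip ip_sym subspace_m ip_pos] by blast

definition koszul :: "'g \<Rightarrow> 'g \<Rightarrow> 'g \<Rightarrow> real" where
  "koszul X Y Z = ip (\<pi> (brk X Y)) Z - ip X (\<pi> (brk Y Z)) - ip (\<pi> (brk X Z)) Y"

lemma linear_koszul: "linear (koszul X Y)"
  by (rule linearI) (simp_all add: koszul_def linearity_simps algebra_simps)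

lemma koszul_add_left: "koszul (X1 + X2) Y Z = koszul X1 Y Z + koszul X2 Y Z"
  and koszul_scale_left: "koszul (c *\<^sub>R X) Y Z = c * koszul X Y Z"
  and koszul_add_mid: "koszul X (Y1 + Y2) Z = koszul X Y1 Z + koszul X Y2 Z"
  and koszul_scale_mid: "koszul X (c *\<^sub>R Y) Z = c * koszul X Y Z"
  by (simp_all add: koszul_def linearity_simps algebra_simps)

lemma lc_alpha_unique_exists: "\<exists>!W. W \<in> m \<and> (\<forall>Z\<in>m. 2 * ip W Z = koszul X Y Z)"
proof -
  obtain B where B: "orthonormal_basis ip m B" using orthonormal_basis_m_exists by blast
  define W where "W = (\<Sum>e\<in>B. (koszul X Y e / 2) *\<^sub>R e)"
  have "W \<in> m"
    unfolding W_def using B subspace_m unfolding orthonormal_basis_def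
    by (intro subspace_sum) (auto intro: subspace_scale)
  moreover have "2 * ip W Z = koszul X Y Z" if "Z \<in> m" for Z
  proof -
    have "2 * ip W Z = (\<Sum>e\<in>B. koszul X Y e * ip e Z)"
      unfolding W_def by (simp add: bilinear_sum_left[OF bilinear_ip] linearity_simps sum_distrib_left)
    also have "\<dots> = (\<Sum>e\<in>B. ip Z e * koszul X Y e)"
      by (intro sum.cong refl) (simp add: ip_sym[of _ Z])
    also have "\<dots> = koszul X Y Z"
      using linear_orthonormal_basis_expansion[OF B bilinear_ip linear_koszul that] by simp
    finally show ?thesis .
  qed
  ultimately have W: "W \<in> m \<and> (\<forall>Z\<in>m. 2 * ip W Z = koszul X Y Z)" by blast
  show ?thesis
  proof (rule ex1I[of _ W])
    show "W \<in> m \<and> (\<forall>Z\<in>m. 2 * ip W Z = koszul X Y Z)" by (fact W)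
    fix W' assume W': "W' \<in> m \<and> (\<forall>Z\<in>m. 2 * ip W' Z = koszul X Y Z)"
    show "W' = W"
    proof (rule eq_if_ip_eq)
      fix Z assume "Z \<in> m"
      hence "2 * ip W' Z = 2 * ip W Z" using W W' by simp
      thus "ip W' Z = ip W Z" by simp
    qed (use W W' in simp_all)
  qed
qed

lemma lc_alpha_in_m: "\<alpha> X Y \<in> m"
  and ip_lc_alpha: "Z \<in> m \<Longrightarrow> 2 * ip (\<alpha> X Y) Z = koszul X Y Z"
  using theI'[OF lc_alpha_unique_exists[of X Y]] unfolding lc_alpha_def koszul_def[symmetric] by auto

lemma lc_alpha_eqI:
  assumes "W \<in> m" "\<And>Z. Z \<in> m \<Longrightarrow> 2 * ip W Z = koszul X Y Z"
  shows "\<alpha> X Y = W"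
proof (rule eq_if_ip_eq[OF lc_alpha_in_m assms(1)])
  fix Z assume "Z \<in> m"
  thus "ip (\<alpha> X Y) Z = ip W Z" using ip_lc_alpha[of Z X Y] assms(2)[of Z] by simp
qed

lemma bilinear_lc_alpha: "bilinear \<alpha>"
  unfolding bilinear_def
proof (intro allI conjI linearI)
  fix X Y1 Y2 show "\<alpha> X (Y1 + Y2) = \<alpha> X Y1 + \<alpha> X Y2"
    by (rule lc_alpha_eqI) (simp_all add: lc_alpha_in_m ip_lc_alpha subspace_add[OF subspace_m] linearity_simps koszul_add_mid)
next
  fix X c Y show "\<alpha> X (c *\<^sub>R Y) = c *\<^sub>R \<alpha> X Y"
    by (rule lc_alpha_eqI) (simp_all add: lc_alpha_in_m ip_lc_alpha subspace_scale[OF subspace_m] linearity_simps koszul_scale_mid)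
next
  fix Y X1 X2 show "\<alpha> (X1 + X2) Y = \<alpha> X1 Y + \<alpha> X2 Y"
    by (rule lc_alpha_eqI) (simp_all add: lc_alpha_in_m ip_lc_alpha subspace_add[OF subspace_m] linearity_simps koszul_add_left)
next
  fix Y c X show "\<alpha> (c *\<^sub>R X) Y = c *\<^sub>R \<alpha> X Y"
    by (rule lc_alpha_eqI) (simp_all add: lc_alpha_in_m ip_lc_alpha subspace_scale[OF subspace_m] linearity_simps koszul_scale_left)
qed

lemma lc_alpha_skew: "Y \<in> m \<Longrightarrow> Z \<in> m \<Longrightarrow> ip (\<alpha> X Y) Z = - ip Y (\<alpha> X Z)"
proof -
  assume "Y \<in> m" "Z \<in> m"
  hence "2 * ip (\<alpha> X Y) Z + 2 * ip (\<alpha> X Z) Y = koszul X Y Z + koszul X Z Y"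
    by (simp add: ip_lc_alpha)
  also have "\<dots> = 0"
    unfolding koszul_def using brk_antisym[of Z Y] ip_sym[of X "\<pi> (brk Z Y)"] ip_sym[of X "\<pi> (brk Y Z)"]
    by (simp add: linearity_simps)
  finally show ?thesis using ip_sym[of Y "\<alpha> X Z"] by simp
qed

lemma lc_alpha_antisym_part: "\<alpha> X Y - \<alpha> Y X = \<pi> (brk X Y)"
proof (rule eq_if_ip_eq)
  show "\<alpha> X Y - \<alpha> Y X \<in> m" using lc_alpha_in_m subspace_m by (simp add: subspace_diff)
  show "\<pi> (brk X Y) \<in> m" by (rule prm_in_m)
  fix Z assume "Z \<in> m"
  have "\<pi> (brk Y X) = - \<pi> (brk X Y)" using brk_antisym[of Y X] by (simp add: linearity_simps)
  hence "koszul X Y Z - koszul Y X Z = 2 * ip (\<pi> (brk X Y)) Z"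
    unfolding koszul_def using ip_sym[of X "\<pi> (brk Y Z)"] ip_sym[of Y "\<pi> (brk X Z)"]
    by (simp add: linearity_simps)
  thus "ip (\<alpha> X Y - \<alpha> Y X) Z = ip (\<pi> (brk X Y)) Z"
    unfolding bilinear_lsub[OF bilinear_ip]
    using ip_lc_alpha[OF \<open>Z \<in> m\<close>, of X Y] ip_lc_alpha[OF \<open>Z \<in> m\<close>, of Y X] by linarith
qed

abbreviation Ric\<^sub>d where "Ric\<^sub>d \<equiv> Ricd brk h m ip"
abbreviation s\<^sub>d where "s\<^sub>d \<equiv> sd brk h m ip"

lemma Rd_eq: "R\<^sub>d X Y Z = \<alpha> X (\<alpha> Y Z) - \<alpha> Y (\<alpha> X Z) - \<alpha> (\<pi> (brk X Y)) Z"
  unfolding Rd_def Let_def ..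

lemmas lc_alpha_simps = bilinear_ladd[OF bilinear_lc_alpha] bilinear_radd[OF bilinear_lc_alpha]
  bilinear_lmul[OF bilinear_lc_alpha] bilinear_rmul[OF bilinear_lc_alpha]
  bilinear_lsub[OF bilinear_lc_alpha] bilinear_rsub[OF bilinear_lc_alpha]

lemma Rd_in_m: "R\<^sub>d X Y Z \<in> m"
  unfolding Rd_eq using lc_alpha_in_m subspace_m by (simp add: subspace_diff)

lemma linear_Rd_fst: "linear (\<lambda>X. R\<^sub>d X Y Z)"
  and linear_Rd_snd: "linear (\<lambda>Y. R\<^sub>d X Y Z)"
  and linear_Rd_thd: "linear (\<lambda>Z. R\<^sub>d X Y Z)"
  by (rule linearI; simp add: Rd_eq lc_alpha_simps linearity_simps algebra_simps)+

lemma bilinear_Rd_trace_sum: "bilinear (\<lambda>Y Z. \<Sum>e\<in>S. ip (R\<^sub>d e Y Z) e)"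
  unfolding bilinear_def
proof (intro allI conjI linear_compose_sum ballI)
  fix Y e
  show "linear (\<lambda>Z. ip (R\<^sub>d e Y Z) e)"
    using linear_compose[OF linear_Rd_thd, of "\<lambda>W. ip W e"] bilinear_ip
    unfolding bilinear_def comp_def by blast
next
  fix Z e
  show "linear (\<lambda>Y. ip (R\<^sub>d e Y Z) e)"
    using linear_compose[OF linear_Rd_snd, of "\<lambda>W. ip W e"] bilinear_ip
    unfolding bilinear_def comp_def by blast
qed

lemma Ricd_orthonormal_basis:
  assumes V: "subspace V" "orthonormal_basis ip V B" and closed: "\<And>X. X \<in> V \<Longrightarrow> R\<^sub>d X Y Z \<in> V"
  shows "Ric\<^sub>d V Y Z = (\<Sum>e\<in>B. ip (R\<^sub>d e Y Z) e)"
  unfolding Ricd_def by (rule lin_trace_orthonormal_basis[OF V bilinear_ip linear_Rd_fst closed])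

lemma sd_orthonormal_basis:
  assumes V: "subspace V" "orthonormal_basis ip V B"
    and closed: "\<And>X Y Z. X \<in> V \<Longrightarrow> Y \<in> V \<Longrightarrow> Z \<in> V \<Longrightarrow> R\<^sub>d X Y Z \<in> V"
  shows "s\<^sub>d V = (\<Sum>Y\<in>B. Ric\<^sub>d V Y Y)"
  unfolding sd_def
  using Ricd_orthonormal_basis[OF V closed]
  by (intro form_trace_orthonormal_basis[OF V(2) bilinear_ip ip_sym bilinear_Rd_trace_sum]) blast

end

section \<open>Invariant Codazzi tensors\<close>

definition codazzi_coeff :: "real \<Rightarrow> real \<Rightarrow> real \<Rightarrow> real" where
  "codazzi_coeff x y z = (if x \<noteq> y \<and> y \<noteq> z \<and> z \<noteq> x then 2 / ((y - z) * (x - z)) else 0)"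

lemma codazzi_coeff_cyclic_sum: "codazzi_coeff x y z + codazzi_coeff y z x + codazzi_coeff z x y = 0"
  unfolding codazzi_coeff_def by (simp add: divide_simps) (simp add: algebra_simps)

lemma codazzi_coeff_swap_nonpos:
  assumes "0 \<le> (y - x) * (y - z)"
  shows "codazzi_coeff x y z + codazzi_coeff z y x \<le> 0"
proof (cases "x \<noteq> y \<and> y \<noteq> z \<and> z \<noteq> x")
  case True
  hence "codazzi_coeff x y z + codazzi_coeff z y x = - 2 / ((y - x) * (y - z))"
    unfolding codazzi_coeff_def by (simp add: divide_simps) (simp add: algebra_simps)
  thus ?thesis using assms by simp
qed (auto simp: codazzi_coeff_def)

(* With a = <alpha(X,Y),Z>, b = <alpha(Y,X),Z>, c = <alpha(Z,Y),X>, the left-hand side is the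
   contribution of Z to <R^d(X,Y)Y,X>; the hypotheses are the Codazzi equation. *)
lemma codazzi_coeff_term:
  fixes a b c x y z :: real
  assumes "x \<noteq> y" and swap: "(y - z) * a = (x - z) * b" and rot: "(y - x) * c = (y - z) * a"
  shows "a * b - (a - b) * c = codazzi_coeff x y z * ((y - z) * a)\<^sup>2"
proof (cases "z = x \<or> z = y")
  case True
  hence "a * b - (a - b) * c = 0"
    using assms by (auto simp: algebra_simps)
  thus ?thesis using True unfolding codazzi_coeff_def by auto
next
  case False
  have "(a * b - (a - b) * c) * ((x - z) * (y - x)) = 2 * (y - z) * a\<^sup>2 * (y - x)"
    using swap rot by algebra
  thus ?thesis using False assms(1) unfolding codazzi_coeff_def
    by (simp add: divide_simps power2_eq_square)
qed

lemma sum_triple_rotate: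
  "(\<Sum>x\<in>S. \<Sum>y\<in>S. \<Sum>z\<in>S. f y z x) = (\<Sum>x\<in>S. \<Sum>y\<in>S. \<Sum>z\<in>S. (f x y z :: 'a::comm_monoid_add))"
proof -
  have "(\<Sum>x\<in>S. \<Sum>y\<in>S. \<Sum>z\<in>S. f y z x) = (\<Sum>y\<in>S. \<Sum>x\<in>S. \<Sum>z\<in>S. f y z x)"
    by (rule sum.swap)
  also have "\<dots> = (\<Sum>y\<in>S. \<Sum>z\<in>S. \<Sum>x\<in>S. f y z x)"
    by (rule sum.cong[OF refl]) (rule sum.swap)
  finally show ?thesis .
qed

locale codazzi_form = reductive_metric brk h m ip
  for brk :: "'g::euclidean_space \<Rightarrow> 'g \<Rightarrow> 'g" and h m ip +
  fixes A :: "'g \<Rightarrow> 'g \<Rightarrow> real"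
  assumes bilinear_A: "bilinear A" and A_sym: "\<And>X Y. A X Y = A Y X"
    and codazzi_A: "codazzi brk h m ip A"
begin

abbreviation E where "E l \<equiv> eigsp m ip A l"

lemma eigsp_subset_m: "X \<in> E l \<Longrightarrow> X \<in> m"
  and eigsp_eq: "X \<in> E l \<Longrightarrow> Y \<in> m \<Longrightarrow> A X Y = l * ip X Y"
  unfolding eigsp_def by auto

lemma subspace_eigsp: "subspace (E l)"
  unfolding subspace_def eigsp_def
  using subspace_m
  by (auto simp: subspace_0 subspace_add subspace_scale bilinear_lzero[OF bilinear_A] bilinear_lzero[OF bilinear_ip]
      bilinear_ladd[OF bilinear_A] bilinear_ladd[OF bilinear_ip] bilinear_lmul[OF bilinear_A]
      bilinear_lmul[OF bilinear_ip] algebra_simps)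

lemma eigsp_orthogonal:
  assumes "X \<in> E x" "Y \<in> E y" "x \<noteq> y"
  shows "ip X Y = 0"
proof -
  have "x * ip X Y = A X Y" using eigsp_eq[OF assms(1) eigsp_subset_m[OF assms(2)]] by simp
  also have "\<dots> = y * ip X Y"
    using eigsp_eq[OF assms(2) eigsp_subset_m[OF assms(1)]] A_sym[of X Y] ip_sym[of X Y] by simp
  finally have "(x - y) * ip X Y = 0" by (simp add: left_diff_distrib)
  thus ?thesis using assms(3) by simp
qed

lemma codazzi_eigsp:
  assumes X: "X \<in> E x" and Y: "Y \<in> E y" and Z: "Z \<in> E z"
  shows "(y - z) * ip (\<alpha> X Y) Z = (x - z) * ip (\<alpha> Y X) Z"
proof -
  have m: "X \<in> m" "Y \<in> m" "Z \<in> m" using X Y Z eigsp_subset_m by auto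
  have "- A (\<alpha> X Y) Z - A Y (\<alpha> X Z) = - A (\<alpha> Y X) Z - A X (\<alpha> Y Z)"
    using codazzi_A m unfolding codazzi_def by blast
  moreover have "A (\<alpha> X Y) Z = z * ip (\<alpha> X Y) Z" "A (\<alpha> Y X) Z = z * ip (\<alpha> Y X) Z"
    using eigsp_eq[OF Z lc_alpha_in_m] A_sym ip_sym by metis+
  moreover have "A Y (\<alpha> X Z) = - y * ip (\<alpha> X Y) Z" "A X (\<alpha> Y Z) = - x * ip (\<alpha> Y X) Z"
    using eigsp_eq[OF Y lc_alpha_in_m] eigsp_eq[OF X lc_alpha_in_m] lc_alpha_skew m by simp_all
  ultimately show ?thesis by (simp add: algebra_simps)
qed

lemma codazzi_eigsp_rotate:
  assumes X: "X \<in> E x" and Y: "Y \<in> E y" and Z: "Z \<in> E z"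
  shows "(y - z) * ip (\<alpha> X Y) Z = (z - x) * ip (\<alpha> Y Z) X"
  using codazzi_eigsp[OF X Y Z] lc_alpha_skew[OF eigsp_subset_m[OF Z] eigsp_subset_m[OF X], of Y]
    ip_sym[of Z "\<alpha> Y X"] by (simp add: algebra_simps)

lemma codazzi_eigsp_swap:
  assumes X: "X \<in> E x" and Y: "Y \<in> E y" and Z: "Z \<in> E z"
  shows "(y - x) * ip (\<alpha> Z Y) X = (y - z) * ip (\<alpha> X Y) Z"
  using codazzi_eigsp_rotate[OF Z Y X] codazzi_eigsp[OF X Y Z]
    lc_alpha_skew[OF eigsp_subset_m[OF X] eigsp_subset_m[OF Z], of Y] ip_sym[of X "\<alpha> Y Z"]
  by (simp add: algebra_simps)

end

locale codazzi_eigenbasis = codazzi_form brk h m ip A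
  for brk :: "'g::euclidean_space \<Rightarrow> 'g \<Rightarrow> 'g" and h m ip A +
  fixes Ob :: "'g set" and \<mu> :: "'g \<Rightarrow> real"
  assumes orthonormal_Ob: "orthonormal_basis ip m Ob" and Ob_eigsp: "\<And>e. e \<in> Ob \<Longrightarrow> e \<in> E (\<mu> e)"
begin

lemma finite_Ob: "finite Ob"
  using orthonormal_Ob unfolding orthonormal_basis_def by auto

lemma Ob_eigenvalue: "e \<in> Ob \<Longrightarrow> E (\<mu> e) \<noteq> {0}"
  using orthonormal_Ob Ob_eigsp bilinear_lzero[OF bilinear_ip, of 0]
  unfolding orthonormal_basis_def by force

lemma in_eigsp_if_orthogonal:
  assumes "W \<in> m" and orth: "\<And>e. e \<in> Ob \<Longrightarrow> \<mu> e \<noteq> l \<Longrightarrow> ip W e = 0"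
  shows "W \<in> E l"
proof -
  have "W = (\<Sum>e\<in>Ob. ip W e *\<^sub>R e)"
    by (rule orthonormal_basis_expansion[OF orthonormal_Ob bilinear_ip \<open>W \<in> m\<close>])
  also have "\<dots> = (\<Sum>e\<in>Ob. (if \<mu> e = l then ip W e else 0) *\<^sub>R e)"
    by (rule sum.cong) (auto simp: orth)
  also have "\<dots> \<in> E l"
    using Ob_eigsp subspace_eigsp
    by (intro subspace_sum) (auto intro: subspace_scale subspace_0)
  finally show ?thesis .
qed

definition Ob_at :: "real \<Rightarrow> 'g set" where "Ob_at l = {e \<in> Ob. \<mu> e = l}"

lemma orthonormal_basis_eigsp: "orthonormal_basis ip (E l) (Ob_at l)"
proof -
  have sub: "Ob_at l \<subseteq> E l" using Ob_eigsp unfolding Ob_at_def by auto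
  have "X \<in> span (Ob_at l)" if X: "X \<in> E l" for X
  proof -
    have "X = (\<Sum>e\<in>Ob. ip X e *\<^sub>R e)"
      by (rule orthonormal_basis_expansion[OF orthonormal_Ob bilinear_ip eigsp_subset_m[OF X]])
    also have "\<dots> = (\<Sum>e\<in>Ob. if \<mu> e = l then ip X e *\<^sub>R e else 0)"
      using eigsp_orthogonal[OF X Ob_eigsp] by (intro sum.cong refl) auto
    also have "\<dots> = (\<Sum>e\<in>Ob_at l. ip X e *\<^sub>R e)"
      unfolding Ob_at_def using finite_Ob by (simp add: sum.inter_filter)
    also have "\<dots> \<in> span (Ob_at l)"
      by (intro span_sum span_scale span_base)
    finally show ?thesis .
  qed
  hence "span (Ob_at l) = E l" using span_minimal[OF sub subspace_eigsp] by blast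
  thus ?thesis
    using orthonormal_Ob sub finite_Ob unfolding orthonormal_basis_def Ob_at_def by auto
qed

lemma lc_alpha_eigsp:
  assumes X: "X \<in> E x" and Z: "Z \<in> E x"
  shows "\<alpha> X Z \<in> E x"
proof (rule in_eigsp_if_orthogonal[OF lc_alpha_in_m])
  fix e assume e: "e \<in> Ob" "\<mu> e \<noteq> x"
  have "(\<mu> e - x) * ip (\<alpha> X e) Z = 0"
    using codazzi_eigsp[OF X Ob_eigsp[OF e(1)] Z] by simp
  hence "ip (\<alpha> X e) Z = 0" using e(2) by simp
  thus "ip (\<alpha> X Z) e = 0"
    using lc_alpha_skew[OF eigsp_subset_m[OF Z] eigsp_subset_m[OF Ob_eigsp[OF e(1)]], of X]
      ip_sym[of Z "\<alpha> X e"] by simp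
qed

lemma Rd_eigsp: "X \<in> E x \<Longrightarrow> Y \<in> E x \<Longrightarrow> Z \<in> E x \<Longrightarrow> R\<^sub>d X Y Z \<in> E x"
  unfolding Rd_eq lc_alpha_antisym_part[symmetric]
  by (intro subspace_diff[OF subspace_eigsp] lc_alpha_eigsp)

lemma Ricd_m_Ob: "Ric\<^sub>d m Y Z = (\<Sum>e\<in>Ob. ip (R\<^sub>d e Y Z) e)"
  by (rule Ricd_orthonormal_basis[OF subspace_m orthonormal_Ob Rd_in_m])

lemma Ricd_eigsp_Ob: "Y \<in> E l \<Longrightarrow> Z \<in> E l \<Longrightarrow> Ric\<^sub>d (E l) Y Z = (\<Sum>e\<in>Ob_at l. ip (R\<^sub>d e Y Z) e)"
  by (rule Ricd_orthonormal_basis[OF subspace_eigsp orthonormal_basis_eigsp Rd_eigsp])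

lemma sd_m_Ob: "s\<^sub>d m = (\<Sum>Y\<in>Ob. Ric\<^sub>d m Y Y)"
  by (rule sd_orthonormal_basis[OF subspace_m orthonormal_Ob Rd_in_m])

lemma sd_eigsp_Ob: "s\<^sub>d (E l) = (\<Sum>Y\<in>Ob_at l. Ric\<^sub>d (E l) Y Y)"
  by (rule sd_orthonormal_basis[OF subspace_eigsp orthonormal_basis_eigsp Rd_eigsp])

lemma ip_Rd_off_diagonal:
  assumes X: "X \<in> E x" and Y: "Y \<in> E y" and xy: "x \<noteq> y"
  shows "ip (R\<^sub>d X Y Y) X = (\<Sum>Z\<in>Ob. codazzi_coeff x y (\<mu> Z) * ((y - \<mu> Z) * ip (\<alpha> X Y) Z)\<^sup>2)"
proof -
  have Xm: "X \<in> m" using X by (rule eigsp_subset_m)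
  have "ip (\<alpha> X (\<alpha> Y Y)) X = - ip (\<alpha> Y Y) (\<alpha> X X)"
    by (rule lc_alpha_skew[OF lc_alpha_in_m Xm])
  also have "ip (\<alpha> Y Y) (\<alpha> X X) = 0"
    using eigsp_orthogonal[OF lc_alpha_eigsp[OF Y Y] lc_alpha_eigsp[OF X X]] xy by simp
  finally have first_term: "ip (\<alpha> X (\<alpha> Y Y)) X = 0" by simp
  have "ip (\<alpha> Y (\<alpha> X Y)) X = - ip (\<alpha> X Y) (\<alpha> Y X)"
    by (rule lc_alpha_skew[OF lc_alpha_in_m Xm])
  also have "ip (\<alpha> X Y) (\<alpha> Y X) = (\<Sum>Z\<in>Ob. ip (\<alpha> Y X) Z * ip (\<alpha> X Y) Z)"
    by (rule linear_orthonormal_basis_expansion[OF orthonormal_Ob bilinear_ip linear_ip_right lc_alpha_in_m])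
  finally have second_term: "ip (\<alpha> Y (\<alpha> X Y)) X = - (\<Sum>Z\<in>Ob. ip (\<alpha> X Y) Z * ip (\<alpha> Y X) Z)"
    by (simp add: mult.commute)
  have "linear (\<lambda>W. ip (\<alpha> W Y) X)"
    by (rule linearI) (simp_all add: lc_alpha_simps linearity_simps)
  hence "ip (\<alpha> (\<pi> (brk X Y)) Y) X = (\<Sum>Z\<in>Ob. ip (\<pi> (brk X Y)) Z * ip (\<alpha> Z Y) X)"
    by (rule linear_orthonormal_basis_expansion[OF orthonormal_Ob bilinear_ip _ prm_in_m])
  hence third_term: "ip (\<alpha> (\<pi> (brk X Y)) Y) X = (\<Sum>Z\<in>Ob. (ip (\<alpha> X Y) Z - ip (\<alpha> Y X) Z) * ip (\<alpha> Z Y) X)"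
    by (simp add: lc_alpha_antisym_part[symmetric] linearity_simps)
  have "ip (R\<^sub>d X Y Y) X = ip (\<alpha> X (\<alpha> Y Y)) X - ip (\<alpha> Y (\<alpha> X Y)) X - ip (\<alpha> (\<pi> (brk X Y)) Y) X"
    by (simp add: Rd_eq linearity_simps)
  also have "\<dots> = (\<Sum>Z\<in>Ob. ip (\<alpha> X Y) Z * ip (\<alpha> Y X) Z - (ip (\<alpha> X Y) Z - ip (\<alpha> Y X) Z) * ip (\<alpha> Z Y) X)"
    unfolding first_term second_term third_term by (simp add: sum_subtractf)
  also have "\<dots> = (\<Sum>Z\<in>Ob. codazzi_coeff x y (\<mu> Z) * ((y - \<mu> Z) * ip (\<alpha> X Y) Z)\<^sup>2)"
  proof (rule sum.cong[OF refl])
    fix Z assume "Z \<in> Ob"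
    with X Y show "ip (\<alpha> X Y) Z * ip (\<alpha> Y X) Z - (ip (\<alpha> X Y) Z - ip (\<alpha> Y X) Z) * ip (\<alpha> Z Y) X =
        codazzi_coeff x y (\<mu> Z) * ((y - \<mu> Z) * ip (\<alpha> X Y) Z)\<^sup>2"
      by (intro codazzi_coeff_term[OF xy] codazzi_eigsp codazzi_eigsp_swap Ob_eigsp)
  qed
  finally show ?thesis .
qed

lemma Ricd_m_eq_Ricd_eigsp_plus:
  assumes Y: "Y \<in> E y"
  shows "Ric\<^sub>d m Y Y = Ric\<^sub>d (E y) Y Y +
    (\<Sum>X\<in>Ob. \<Sum>Z\<in>Ob. codazzi_coeff (\<mu> X) y (\<mu> Z) * ((y - \<mu> Z) * ip (\<alpha> X Y) Z)\<^sup>2)"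
proof -
  have split: "ip (R\<^sub>d X Y Y) X = (if \<mu> X = y then ip (R\<^sub>d X Y Y) X else 0) +
      (\<Sum>Z\<in>Ob. codazzi_coeff (\<mu> X) y (\<mu> Z) * ((y - \<mu> Z) * ip (\<alpha> X Y) Z)\<^sup>2)" if "X \<in> Ob" for X
  proof (cases "\<mu> X = y")
    case True thus ?thesis by (simp add: codazzi_coeff_def)
  next
    case False thus ?thesis using ip_Rd_off_diagonal[OF Ob_eigsp[OF that] Y] by simp
  qed
  have "(\<Sum>X\<in>Ob. if \<mu> X = y then ip (R\<^sub>d X Y Y) X else 0) = Ric\<^sub>d (E y) Y Y"
    unfolding Ricd_eigsp_Ob[OF Y Y] Ob_at_def using finite_Ob by (simp add: sum.inter_filter)
  moreover have "Ric\<^sub>d m Y Y = (\<Sum>X\<in>Ob. (if \<mu> X = y then ip (R\<^sub>d X Y Y) X else 0) +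
      (\<Sum>Z\<in>Ob. codazzi_coeff (\<mu> X) y (\<mu> Z) * ((y - \<mu> Z) * ip (\<alpha> X Y) Z)\<^sup>2))"
    unfolding Ricd_m_Ob using split by (rule sum.cong[OF refl])
  ultimately show ?thesis by (simp add: sum.distrib)
qed

lemma Ricd_m_le_Ricd_eigsp_Ob:
  assumes Y: "Y \<in> E y" and extremal: "(\<forall>e\<in>Ob. y \<le> \<mu> e) \<or> (\<forall>e\<in>Ob. \<mu> e \<le> y)"
  shows "Ric\<^sub>d m Y Y \<le> Ric\<^sub>d (E y) Y Y"
proof -
  define T where "T X Z = ((y - \<mu> Z) * ip (\<alpha> X Y) Z)\<^sup>2" for X Z
  define S where "S = (\<Sum>X\<in>Ob. \<Sum>Z\<in>Ob. codazzi_coeff (\<mu> X) y (\<mu> Z) * T X Z)"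
  have T_swap: "T Z X = T X Z" if "X \<in> Ob" "Z \<in> Ob" for X Z
    unfolding T_def using codazzi_eigsp_swap[OF Ob_eigsp[OF that(1)] Y Ob_eigsp[OF that(2)]] by simp
  have "2 * S = S + (\<Sum>Z\<in>Ob. \<Sum>X\<in>Ob. codazzi_coeff (\<mu> Z) y (\<mu> X) * T Z X)"
    unfolding S_def by simp
  also have "\<dots> = (\<Sum>X\<in>Ob. \<Sum>Z\<in>Ob. (codazzi_coeff (\<mu> X) y (\<mu> Z) + codazzi_coeff (\<mu> Z) y (\<mu> X)) * T X Z)"
    unfolding S_def using T_swap
    by (subst (2) sum.swap) (simp add: sum.distrib[symmetric] distrib_right)
  also have "\<dots> \<le> 0"
  proof (intro sum_nonpos mult_nonpos_nonneg codazzi_coeff_swap_nonpos)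
    fix X Z assume "X \<in> Ob" "Z \<in> Ob"
    thus "0 \<le> (y - \<mu> X) * (y - \<mu> Z)"
      using extremal by (auto intro: mult_nonneg_nonneg mult_nonpos_nonpos)
    show "0 \<le> T X Z" unfolding T_def by simp
  qed
  finally have "S \<le> 0" by simp
  thus ?thesis using Ricd_m_eq_Ricd_eigsp_plus[OF Y] unfolding S_def T_def by simp
qed

lemma sum_sd_eigsp_eq_sd_m_Ob:
  assumes L: "finite L" "\<mu> ` Ob \<subseteq> L"
  shows "(\<Sum>l\<in>L. s\<^sub>d (E l)) = s\<^sub>d m"
proof -
  define T where "T X Y Z = ((\<mu> Y - \<mu> Z) * ip (\<alpha> X Y) Z)\<^sup>2" for X Y Z
  define g where "g X Y Z = codazzi_coeff (\<mu> X) (\<mu> Y) (\<mu> Z) * T X Y Z" for X Y Z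
  define S where "S = (\<Sum>X\<in>Ob. \<Sum>Y\<in>Ob. \<Sum>Z\<in>Ob. g X Y Z)"
  have T_rotate: "T Y Z X = T X Y Z" if "X \<in> Ob" "Y \<in> Ob" "Z \<in> Ob" for X Y Z
    unfolding T_def using codazzi_eigsp_rotate[OF Ob_eigsp[OF that(1)] Ob_eigsp[OF that(2)] Ob_eigsp[OF that(3)]]
    by simp
  have "3 * S = S + (\<Sum>X\<in>Ob. \<Sum>Y\<in>Ob. \<Sum>Z\<in>Ob. g Y Z X) + (\<Sum>X\<in>Ob. \<Sum>Y\<in>Ob. \<Sum>Z\<in>Ob. g Z X Y)"
    unfolding S_def sum_triple_rotate[of "\<lambda>x y z. g z x y"] sum_triple_rotate[of g] by simp
  also have "\<dots> = (\<Sum>X\<in>Ob. \<Sum>Y\<in>Ob. \<Sum>Z\<in>Ob. (codazzi_coeff (\<mu> X) (\<mu> Y) (\<mu> Z) +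
      codazzi_coeff (\<mu> Y) (\<mu> Z) (\<mu> X) + codazzi_coeff (\<mu> Z) (\<mu> X) (\<mu> Y)) * T X Y Z)"
    unfolding S_def g_def using T_rotate by (simp add: sum.distrib[symmetric] distrib_right)
  also have "\<dots> = 0" by (simp add: codazzi_coeff_cyclic_sum)
  finally have "S = 0" by simp
  have "(\<Sum>l\<in>L. s\<^sub>d (E l)) = (\<Sum>l\<in>L. \<Sum>Y\<in>{Y \<in> Ob. \<mu> Y = l}. Ric\<^sub>d (E (\<mu> Y)) Y Y)"
    unfolding sd_eigsp_Ob Ob_at_def by (intro sum.cong refl) auto
  also have "\<dots> = (\<Sum>Y\<in>Ob. Ric\<^sub>d (E (\<mu> Y)) Y Y)"
    by (rule sum.group[OF finite_Ob L(1) L(2)])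
  also have "\<dots> = (\<Sum>Y\<in>Ob. Ric\<^sub>d m Y Y) - (\<Sum>Y\<in>Ob. \<Sum>X\<in>Ob. \<Sum>Z\<in>Ob. g X Y Z)"
    unfolding g_def T_def using Ricd_m_eq_Ricd_eigsp_plus[OF Ob_eigsp] by (simp add: sum.distrib)
  also have "(\<Sum>Y\<in>Ob. \<Sum>X\<in>Ob. \<Sum>Z\<in>Ob. g X Y Z) = S"
    unfolding S_def by (rule sum.swap)
  finally show ?thesis using \<open>S = 0\<close> sd_m_Ob by simp
qed

end

context codazzi_form
begin

lemma eigenbasis_exists: "\<exists>Ob \<mu>. codazzi_eigenbasis brk h m ip A Ob \<mu>"
proof -
  obtain Ob where Ob: "orthonormal_basis ip m Ob" and eig: "\<forall>e\<in>Ob. \<exists>l. \<forall>Z\<in>m. A e Z = l * ip e Z"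
    using orthonormal_eigenbasis_exists[OF bilinear_A A_sym bilinear_ip ip_sym subspace_m ip_pos] by blast
  then obtain \<mu> where "\<forall>e\<in>Ob. \<forall>Z\<in>m. A e Z = \<mu> e * ip e Z" by metis
  hence "\<And>e. e \<in> Ob \<Longrightarrow> e \<in> E (\<mu> e)" using Ob unfolding orthonormal_basis_def eigsp_def by auto
  with Ob have "codazzi_eigenbasis brk h m ip A Ob \<mu>" by unfold_locales
  thus ?thesis by blast
qed

theorem Ricd_m_le_Ricd_extremal_eigsp:
  assumes Y: "Y \<in> E y" and extremal: "(\<forall>l. E l \<noteq> {0} \<longrightarrow> y \<le> l) \<or> (\<forall>l. E l \<noteq> {0} \<longrightarrow> l \<le> y)"
  shows "Ric\<^sub>d m Y Y \<le> Ric\<^sub>d (E y) Y Y"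
proof -
  obtain Ob \<mu> where "codazzi_eigenbasis brk h m ip A Ob \<mu>" using eigenbasis_exists by blast
  then interpret codazzi_eigenbasis brk h m ip A Ob \<mu> .
  have "(\<forall>e\<in>Ob. y \<le> \<mu> e) \<or> (\<forall>e\<in>Ob. \<mu> e \<le> y)" using extremal Ob_eigenvalue by blast
  thus ?thesis by (rule Ricd_m_le_Ricd_eigsp_Ob[OF Y])
qed

theorem sum_sd_eigsp_eq_sd_m:
  assumes "finite L" "{l. E l \<noteq> {0}} \<subseteq> L"
  shows "(\<Sum>l\<in>L. s\<^sub>d (E l)) = s\<^sub>d m"
proof -
  obtain Ob \<mu> where "codazzi_eigenbasis brk h m ip A Ob \<mu>" using eigenbasis_exists by blast
  then interpret codazzi_eigenbasis brk h m ip A Ob \<mu> .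
  have "\<mu> ` Ob \<subseteq> L" using assms(2) Ob_eigenvalue by blast
  thus ?thesis by (rule sum_sd_eigsp_eq_sd_m_Ob[OF assms(1)])
qed

lemma eigsp_decomposition:
  assumes lam: "inj_on lam I" "finite I" "{l. E l \<noteq> {0}} \<subseteq> lam ` I" and Y: "Y \<in> m"
  shows "\<exists>c. (\<forall>i\<in>I. c i \<in> E (lam i)) \<and> Y = (\<Sum>i\<in>I. c i)"
proof -
  obtain Ob \<mu> where "codazzi_eigenbasis brk h m ip A Ob \<mu>" using eigenbasis_exists by blast
  then interpret codazzi_eigenbasis brk h m ip A Ob \<mu> .
  define c where "c i = (\<Sum>e\<in>Ob_at (lam i). ip Y e *\<^sub>R e)" for i
  have "c i \<in> E (lam i)" for i
    using orthonormal_basis_eigsp[of "lam i"] subspace_eigsp unfolding c_def orthonormal_basis_def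
    by (intro subspace_sum subspace_scale) auto
  moreover have "Y = (\<Sum>i\<in>I. c i)"
  proof -
    have "Y = (\<Sum>e\<in>Ob. ip Y e *\<^sub>R e)"
      by (rule orthonormal_basis_expansion[OF orthonormal_Ob bilinear_ip Y])
    also have "\<dots> = (\<Sum>l\<in>lam ` I. \<Sum>e\<in>Ob_at l. ip Y e *\<^sub>R e)"
      unfolding Ob_at_def using lam(2,3) Ob_eigenvalue
      by (intro sum.group[OF finite_Ob, symmetric]) auto
    also have "\<dots> = (\<Sum>i\<in>I. c i)"
      unfolding c_def by (rule sum.reindex_cong[OF lam(1) refl refl])
    finally show ?thesis .
  qed
  ultimately show ?thesis by blast
qed

lemma dcomp_eigsp:
  assumes lam: "inj_on lam {1..r}" "{l. E l \<noteq> {0}} \<subseteq> lam ` {1..r}"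
    and j: "j \<in> {1..r}" and Y: "Y \<in> m"
  shows "dcomp (\<lambda>i. E (lam i)) r j Y \<in> E (lam j)"
proof -
  obtain c where c: "\<And>i. i \<in> {1..r} \<Longrightarrow> c i \<in> E (lam i)" and Yc: "Y = (\<Sum>i=1..r. c i)"
    using eigsp_decomposition[OF lam(1) finite_atLeastAtMost lam(2) Y] by blast
  have "dcomp (\<lambda>i. E (lam i)) r j Y = c j"
  proof (rule dcomp_eqI[OF bilinear_ip subspace_eigsp _ _ j c Yc])
    fix i k X Z assume "i \<in> {1..r}" "k \<in> {1..r}" "i \<noteq> k" "X \<in> E (lam i)" "Z \<in> E (lam k)"
    thus "ip X Z = 0" using eigsp_orthogonal lam(1) by (metis inj_onD)
  qed (use ip_pos eigsp_subset_m in blast)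
  thus ?thesis using c[OF j] by simp
qed

end

lemma codazzi_formI:
  assumes "reductive_decomp brk h m" "inv_inner brk h m ip" "inv_sym_form brk h m A" "codazzi brk h m ip A"
  shows "codazzi_form brk h m ip A"
  using assms unfolding reductive_decomp_def lie_bracket_def inv_inner_def inv_sym_form_def
  by unfold_locales blast+

lemma strict_mono_on_endpoint_extremal:
  fixes lam :: "nat \<Rightarrow> 'a::linorder"
  assumes "strict_mono_on {1..r} lam" "j \<in> {1, r} \<inter> {1..r}"
  shows "(\<forall>i\<in>{1..r}. lam j \<le> lam i) \<or> (\<forall>i\<in>{1..r}. lam i \<le> lam j)"
  using assms strict_mono_on_leD[OF assms(1)] by auto

theorem proposition3p3:
  fixes brk :: "'g::euclidean_space \<Rightarrow> 'g \<Rightarrow> 'g"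
    and h m :: "'g set" and ip A :: "'g \<Rightarrow> 'g \<Rightarrow> real"
    and r :: nat and lam :: "nat \<Rightarrow> real"
  assumes red: "reductive_decomp brk h m"
    and ip: "inv_inner brk h m ip"
    and Ainv: "inv_sym_form brk h m A"
    and cod: "codazzi brk h m ip A"
    and lam_mono: "strict_mono_on {1..r} lam"
    and eigvals: "{l. eigsp m ip A l \<noteq> {0}} = lam ` {1..r}"
  shows "(\<forall>j\<in>{1, r} \<inter> {1..r}. \<forall>Y\<in>m.
            Ricd brk h m ip m (dcomp (\<lambda>i. eigsp m ip A (lam i)) r j Y)
                              (dcomp (\<lambda>i. eigsp m ip A (lam i)) r j Y)
          \<le> Ricd brk h m ip (eigsp m ip A (lam j))
                              (dcomp (\<lambda>i. eigsp m ip A (lam i)) r j Y)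
                              (dcomp (\<lambda>i. eigsp m ip A (lam i)) r j Y))
       \<and> (\<Sum>i=1..r. sd brk h m ip (eigsp m ip A (lam i))) = sd brk h m ip m"
proof -
  interpret codazzi_form brk h m ip A using red ip Ainv cod by (rule codazzi_formI)
  have inj: "inj_on lam {1..r}" using lam_mono by (rule strict_mono_on_imp_inj_on)
  have eigs: "{l. E l \<noteq> {0}} \<subseteq> lam ` {1..r}" using eigvals by simp
  have ricci_inequality: "Ric\<^sub>d m (dcomp (\<lambda>i. E (lam i)) r j Y) (dcomp (\<lambda>i. E (lam i)) r j Y)
      \<le> Ric\<^sub>d (E (lam j)) (dcomp (\<lambda>i. E (lam i)) r j Y) (dcomp (\<lambda>i. E (lam i)) r j Y)"
    if j: "j \<in> {1, r} \<inter> {1..r}" and Y: "Y \<in> m" for j Y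
  proof (rule Ricd_m_le_Ricd_extremal_eigsp[OF dcomp_eigsp[OF inj eigs _ Y]])
    show "j \<in> {1..r}" using j by blast
    show "(\<forall>l. E l \<noteq> {0} \<longrightarrow> lam j \<le> l) \<or> (\<forall>l. E l \<noteq> {0} \<longrightarrow> l \<le> lam j)"
      using strict_mono_on_endpoint_extremal[OF lam_mono j] eigs by blast
  qed
  have "(\<Sum>i=1..r. s\<^sub>d (E (lam i))) = (\<Sum>l\<in>lam ` {1..r}. s\<^sub>d (E l))"
    using sum.reindex[OF inj, of "\<lambda>l. s\<^sub>d (E l)"] by (simp add: comp_def)
  also have "\<dots> = s\<^sub>d m"
    by (rule sum_sd_eigsp_eq_sd_m[OF finite_imageI[OF finite_atLeastAtMost] eigs])
  finally show ?thesis using ricci_inequality by blast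
qed

end
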